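(* Let $x\ne y$ be points of $\partial\mathbb{H}^2$ and let $r,s$ be two distinct vertices of the ladder $\mathcal{L}(x,y)$. Then $\mathcal{L}(r,s)\subseteq\mathcal{L}(x,y)$.
   Context: The Farey graph $\mathcal{F}$ has vertex set $\mathbb{Q}\cup\{\infty\}$ (vertices $p/q$ in lowest terms, $\infty=1/0$), with $p/q$ and $r/s$ adjacent iff $|ps-qr|=1$. It is embedded in $\overline{\mathbb{H}}=\mathbb{H}^2\cup\partial\mathbb{H}^2$ (upper half-plane model, $\partial\mathbb{H}^2=\mathbb{R}\cup\{\infty\}$) with edges realized as hyperbolic geodesics; the closures of the complementary regions are ideal triangles called Farey triangles. For distinct $x,y\in\partial\mathbb{H}^2$, the ladder $\mathcal{L}(x,y)$ is the union of all Farey triangles whose interior meets the hyperbolic geodesic from $x$ to $y$ (if $x,y$ are adjacent vertices this is empty). *)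

theory Defs
  imports Complex_Main
begin

text \<open>Boundary of the upper half-plane: \<open>real option\<close>, with \<open>None\<close> = \<infinity>.
  Points of the closed upper half-plane: \<open>complex option\<close>, with \<open>None\<close> = \<infinity>
  and \<open>Some z\<close> for \<open>Im z \<ge> 0\<close>.  Farey vertices: \<open>rat option\<close>, \<open>None\<close> = 1/0.\<close>

definition emb :: "rat option \<Rightarrow> real option" where
  "emb u = map_option of_rat u"

definition bd :: "real option \<Rightarrow> complex option" where
  "bd u = map_option complex_of_real u"

fun frac :: "rat option \<Rightarrow> int \<times> int" where
  "frac None = (1, 0)"
| "frac (Some q) = quotient_of q"

definition farey_adj :: "rat option \<Rightarrow> rat option \<Rightarrow> bool" where
  "farey_adj u v \<longleftrightarrow> (let (p, q) = frac u; (r, s) = frac v in \<bar>p * s - q * r\<bar> = 1)"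

definition farey_triangle :: "rat option \<Rightarrow> rat option \<Rightarrow> rat option \<Rightarrow> bool" where
  "farey_triangle u v w \<longleftrightarrow> farey_adj u v \<and> farey_adj v w \<and> farey_adj w u"

fun geod :: "real option \<Rightarrow> real option \<Rightarrow> complex set" where
  "geod (Some a) (Some b) =
     {z. Im z > 0 \<and> cmod (z - complex_of_real ((a + b) / 2)) = \<bar>a - b\<bar> / 2}"
| "geod (Some a) None = {z. Im z > 0 \<and> Re z = a}"
| "geod None (Some a) = {z. Im z > 0 \<and> Re z = a}"
| "geod None None = {}"

text \<open>Side function of the geodesic between two boundary points: its sign tells on which
  side of the geodesic a point of the closed half-plane lies (zero on the geodesic).\<close>
fun sd :: "real option \<Rightarrow> real option \<Rightarrow> complex option \<Rightarrow> real" where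
  "sd (Some a) (Some b) (Some z) =
     (cmod (z - complex_of_real ((a + b) / 2)))\<^sup>2 - ((a - b) / 2)\<^sup>2"
| "sd (Some a) (Some b) None = 1"
| "sd (Some a) None (Some z) = Re z - a"
| "sd None (Some a) (Some z) = Re z - a"
| "sd _ _ _ = 0"

definition tri_int :: "real option \<Rightarrow> real option \<Rightarrow> real option \<Rightarrow> complex set" where
  "tri_int u v w = {z. Im z > 0 \<and>
      sd u v (Some z) * sd u v (bd w) > 0 \<and>
      sd v w (Some z) * sd v w (bd u) > 0 \<and>
      sd w u (Some z) * sd w u (bd v) > 0}"

text \<open>Closed ideal triangle in the closed half-plane (closure of the interior in \<open>\<bbbH>\<^sup>2 \<union> \<partial>\<bbbH>\<^sup>2\<close>):
  the closure in \<open>\<bbbH>\<^sup>2\<close> together with the three ideal vertices.\<close>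
definition tri_closed :: "real option \<Rightarrow> real option \<Rightarrow> real option \<Rightarrow> complex option set" where
  "tri_closed u v w = Some ` {z. Im z > 0 \<and>
      sd u v (Some z) * sd u v (bd w) \<ge> 0 \<and>
      sd v w (Some z) * sd v w (bd u) \<ge> 0 \<and>
      sd w u (Some z) * sd w u (bd v) \<ge> 0} \<union> {bd u, bd v, bd w}"

definition ladder_triangles :: "real option \<Rightarrow> real option \<Rightarrow> (rat option \<times> rat option \<times> rat option) set" where
  "ladder_triangles x y = {(u, v, w). farey_triangle u v w \<and>
      tri_int (emb u) (emb v) (emb w) \<inter> geod x y \<noteq> {}}"

definition ladder :: "real option \<Rightarrow> real option \<Rightarrow> complex option set" where
  "ladder x y = (\<Union>(u, v, w) \<in> ladder_triangles x y. tri_closed (emb u) (emb v) (emb w))"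

definition ladder_vertices :: "real option \<Rightarrow> real option \<Rightarrow> rat option set" where
  "ladder_vertices x y = (\<Union>(u, v, w) \<in> ladder_triangles x y. {u, v, w})"

end

(*
  Boundary points and points of the upper half-plane are mapped into R^3: a real t goes to
  (t^2, t, 1), infinity to (1, 0, 0), and z to (|z|^2, Re z, 1). The boundary points become
  isotropic vectors of the quadratic form x1 x3 - x2^2, the geodesic xy becomes the open
  cone spanned by the images of x and y, and the interior of an ideal triangle uvw the open
  cone spanned by the images of u, v, w. A geodesic misses the interior of an ideal triangle
  iff both of its endpoints lie weakly beyond one side; the nontrivial direction is a
  one-dimensional linear feasibility problem whose pairwise constraints are compatible
  because the endpoints are isotropic. Farey edges never cross, by the Pluecker relation
  for 2x2 determinants.

  Now let T be a Farey triangle meeting the geodesic rs. If T missed xy, both x and y would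
  lie beyond a side vw of T. Every ladder triangle of xy has an interior point on xy, hence
  beyond vw, and its vertices lie weakly on one side of the Farey edge vw; so all of them,
  in particular r and s, lie beyond vw, and rs would miss T.
*)
theory Submission
  imports Defs "HOL-Analysis.Product_Vector"
begin

lemma finite_sets_separated:
  fixes L U :: "'a :: unbounded_dense_linorder set"
  assumes "finite L" "finite U" "\<And>l u. l \<in> L \<Longrightarrow> u \<in> U \<Longrightarrow> l < u"
  obtains t where "\<And>l. l \<in> L \<Longrightarrow> l < t" "\<And>u. u \<in> U \<Longrightarrow> t < u"
proof (cases "L = {}"; cases "U = {}")
  assume "L = {}" "U \<noteq> {}"
  obtain t where "t < Min U"
    using lt_ex by blast
  with \<open>L = {}\<close> show ?thesis
    using that assms(2) by (meson Min_le empty_iff order_less_le_trans)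
next
  assume "L \<noteq> {}" "U = {}"
  obtain t where "Max L < t"
    using gt_ex by blast
  with \<open>U = {}\<close> show ?thesis
    using that assms(1) by (meson Max_ge empty_iff order_le_less_trans)
next
  assume "L \<noteq> {}" "U \<noteq> {}"
  then have "Max L < Min U"
    using assms by simp
  then obtain t where "Max L < t" "t < Min U"
    using dense by blast
  then show ?thesis
    using that assms(1,2) by (meson Max_ge Min_le order_le_less_trans order_less_le_trans)
qed (use that in blast)

lemma exists_pos_affine_all_pos:
  fixes a b :: "'i \<Rightarrow> real"
  assumes "finite I" and pos: "\<And>i. i \<in> I \<Longrightarrow> 0 < a i \<or> 0 < b i"
    and compatible: "\<And>i j. i \<in> I \<Longrightarrow> j \<in> I \<Longrightarrow> 0 < a i \<Longrightarrow> b i \<le> 0 \<Longrightarrow> a j < 0 \<Longrightarrow> 0 < b j \<Longrightarrow>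
      0 < a i * b j - a j * b i"
  obtains t where "0 < t" "\<And>i. i \<in> I \<Longrightarrow> 0 < t * a i + b i"
proof -
  define L where "L = insert 0 ((\<lambda>i. - b i / a i) ` {i \<in> I. 0 < a i})"
  define U where "U = (\<lambda>i. b i / - a i) ` {i \<in> I. a i < 0}"
  have "finite L" "finite U"
    using \<open>finite I\<close> by (simp_all add: L_def U_def)
  have separated: "l < u" if "l \<in> L" "u \<in> U" for l u
  proof -
    obtain j where j: "j \<in> I" "a j < 0" "u = b j / - a j"
      using \<open>u \<in> U\<close> by (auto simp: U_def)
    with pos have "0 < b j"
      by fastforce
    with j have "0 < u"
      by (simp add: divide_pos_neg)
    show "l < u"
    proof (cases "l = 0")
      case False
      then obtain i where i: "i \<in> I" "0 < a i" "l = - b i / a i"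
        using \<open>l \<in> L\<close> by (auto simp: L_def)
      show ?thesis
      proof (cases "0 < b i")
        case True
        with i have "l < 0"
          by simp
        with \<open>0 < u\<close> show ?thesis
          by simp
      next
        case False
        with i j \<open>0 < b j\<close> have "0 < a i * b j - a j * b i"
          by (intro compatible) auto
        with i(2) j(2) show ?thesis
          unfolding i(3) j(3) by (simp add: field_simps)
      qed
    qed (use \<open>0 < u\<close> in simp)
  qed
  obtain t where lower: "\<And>l. l \<in> L \<Longrightarrow> l < t" and upper: "\<And>u. u \<in> U \<Longrightarrow> t < u"
    using finite_sets_separated[OF \<open>finite L\<close> \<open>finite U\<close> separated] by blast
  have "0 < t * a i + b i" if "i \<in> I" for i
  proof -
    consider "0 < a i" | "a i = 0" | "a i < 0"
      by linarith
    then show ?thesis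
    proof cases
      case 1
      with \<open>i \<in> I\<close> have "- b i / a i < t"
        by (intro lower) (auto simp: L_def)
      with 1 show ?thesis
        by (simp add: field_simps)
    next
      case 2
      with pos[OF \<open>i \<in> I\<close>] show ?thesis
        by simp
    next
      case 3
      with \<open>i \<in> I\<close> have "t < b i / - a i"
        by (intro upper) (auto simp: U_def)
      with 3 show ?thesis
        by (simp add: field_simps)
    qed
  qed
  moreover have "0 < t"
    using lower by (simp add: L_def)
  ultimately show ?thesis
    using that by blast
qed

type_synonym vec3 = "real \<times> real \<times> real"

fun det3 :: "vec3 \<Rightarrow> vec3 \<Rightarrow> vec3 \<Rightarrow> real" where
  "det3 (a1, a2, a3) (b1, b2, b3) (c1, c2, c3) =
     a1 * (b2 * c3 - b3 * c2) - a2 * (b1 * c3 - b3 * c1) + a3 * (b1 * c2 - b2 * c1)"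

fun bform :: "vec3 \<Rightarrow> vec3 \<Rightarrow> real" where
  "bform (a1, a2, a3) (b1, b2, b3) = (a1 * b3 + a3 * b1) / 2 - a2 * b2"

lemma det3_rotate: "det3 a b c = det3 b c a"
  by (cases a; cases b; cases c) (simp add: algebra_simps)

lemma det3_swap: "det3 a b c = - det3 a c b"
  by (cases a; cases b; cases c) (simp add: algebra_simps)

lemma det3_repeat [simp]: "det3 a a c = 0" "det3 a c a = 0" "det3 c a a = 0"
  by (cases a; cases c; simp add: algebra_simps)+

lemma det3_add [simp]: "det3 (x + y) b c = det3 x b c + det3 y b c"
  by (cases x; cases y; cases b; cases c) (simp add: algebra_simps)

lemma det3_scaleR [simp]: "det3 (r *\<^sub>R x) b c = r * det3 x b c"
  by (cases x; cases b; cases c) (simp add: algebra_simps)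

lemma det3_scaleR_all: "det3 (a *\<^sub>R x) (b *\<^sub>R y) (c *\<^sub>R z) = a * b * c * det3 x y z"
  by (cases x; cases y; cases z) (simp add: algebra_simps)

lemma vec3_cramer:
  assumes "det3 U V W \<noteq> 0"
  shows "X = (det3 X V W / det3 U V W) *\<^sub>R U + (det3 U X W / det3 U V W) *\<^sub>R V
           + (det3 U V X / det3 U V W) *\<^sub>R W"
proof -
  obtain u1 u2 u3 v1 v2 v3 w1 w2 w3 x1 x2 x3 where
    vars: "U = (u1, u2, u3)" "V = (v1, v2, v3)" "W = (w1, w2, w3)" "X = (x1, x2, x3)"
    by (cases U; cases V; cases W; cases X) auto
  define D d1 d2 d3 where "D = det3 U V W" and "d1 = det3 X V W" and "d2 = det3 U X W"
    and "d3 = det3 U V X"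
  have "D \<noteq> 0"
    using assms D_def by simp
  have "D * x1 = d1 * u1 + d2 * v1 + d3 * w1" "D * x2 = d1 * u2 + d2 * v2 + d3 * w2"
    "D * x3 = d1 * u3 + d2 * v3 + d3 * w3"
    unfolding D_def d1_def d2_def d3_def vars by (simp_all add: algebra_simps)
  then have "X = (1 / D) *\<^sub>R (d1 *\<^sub>R U + d2 *\<^sub>R V + d3 *\<^sub>R W)"
    using \<open>D \<noteq> 0\<close> unfolding vars by (simp add: field_simps)
  then show ?thesis
    unfolding D_def d1_def d2_def d3_def by (simp add: scaleR_add_right)
qed

lemma bform_commute: "bform a b = bform b a"
  by (cases a; cases b) (simp add: algebra_simps)

lemma bform_add [simp]:
  "bform (x + y) z = bform x z + bform y z" "bform z (x + y) = bform z x + bform z y"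
  by (cases x; cases y; cases z; simp add: algebra_simps add_divide_distrib)+

lemma bform_scaleR [simp]: "bform (r *\<^sub>R x) z = r * bform x z" "bform z (r *\<^sub>R x) = r * bform z x"
  by (cases x; cases z; simp add: algebra_simps)+

lemma bform_isotropic_comb:
  assumes "bform U U = 0" "bform V V = 0"
  shows "bform (l *\<^sub>R U + m *\<^sub>R V) (l *\<^sub>R U + m *\<^sub>R V) = 2 * l * m * bform U V"
  using assms by (simp add: bform_commute[of V U] algebra_simps)

lemma bform_isotropic_comb3:
  assumes "bform U U = 0" "bform V V = 0" "bform W W = 0"
    and X: "X = a1 *\<^sub>R U + a2 *\<^sub>R V + a3 *\<^sub>R W"
  shows "bform X X = 2 * (a1 * a2 * bform U V + a2 * a3 * bform V W + a3 * a1 * bform W U)"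
    and "bform X U = a2 * bform U V + a3 * bform W U"
    and "bform X V = a1 * bform U V + a3 * bform V W"
  using assms by (simp_all add: bform_commute[of V U] bform_commute[of W V] bform_commute[of U W]
      algebra_simps)

section \<open>The closed half-plane as a cone\<close>

fun bvec :: "real option \<Rightarrow> vec3" where
  "bvec None = (1, 0, 0)"
| "bvec (Some t) = (t\<^sup>2, t, 1)"

definition hvec :: "complex \<Rightarrow> vec3" where
  "hvec z = ((Re z)\<^sup>2 + (Im z)\<^sup>2, Re z, 1)"

fun cvec :: "complex option \<Rightarrow> vec3" where
  "cvec None = bvec None"
| "cvec (Some z) = hvec z"

lemma cvec_bd [simp]: "cvec (bd a) = bvec a"
  by (cases a) (simp_all add: bd_def hvec_def)

lemma bform_bvec_self [simp]: "bform (bvec a) (bvec a) = 0"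
  by (cases a) (simp_all add: power2_eq_square)

lemma bform_bvec_pos:
  assumes "a \<noteq> b"
  shows "0 < bform (bvec a) (bvec b)"
proof (cases a; cases b)
  fix s t
  assume st: "a = Some s" "b = Some t"
  then have "bform (bvec a) (bvec b) = (s - t)\<^sup>2 / 2"
    by (simp add: power2_eq_square field_simps)
  moreover have "0 < (s - t)\<^sup>2"
    using st assms by simp
  ultimately show ?thesis
    by linarith
qed (use assms in auto)

lemma bform_bvec_nonneg: "0 \<le> bform (bvec a) (bvec b)"
  by (cases "a = b") (simp_all add: less_imp_le bform_bvec_pos)

lemma bform_hvec_self: "bform (hvec z) (hvec z) = (Im z)\<^sup>2"
  by (simp add: hvec_def power2_eq_square field_simps)

lemma bform_hvec_infinity: "bform (hvec z) (bvec None) = 1 / 2"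
  by (simp add: hvec_def)

lemma det3_bvec_nonzero:
  assumes "a \<noteq> b" "b \<noteq> c" "c \<noteq> a"
  shows "det3 (bvec a) (bvec b) (bvec c) \<noteq> 0"
proof (cases a; cases b; cases c)
  fix r s t
  assume "a = Some r" "b = Some s" "c = Some t"
  moreover have "det3 (bvec (Some r)) (bvec (Some s)) (bvec (Some t)) = (r - s) * (s - t) * (r - t)"
    by (simp add: power2_eq_square algebra_simps)
  ultimately show ?thesis
    using assms by auto
qed (use assms in auto)

lemma timelike_hvec:
  assumes "0 < bform P (bvec None)" "0 < bform P P"
  obtains z c where "0 < Im z" "0 < c" "hvec z = c *\<^sub>R P"
proof -
  obtain p1 p2 p3 where P: "P = (p1, p2, p3)"
    by (cases P) auto
  have p3: "0 < p3" and "0 < p1 * p3 - p2\<^sup>2"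
    using assms by (simp_all add: P power2_eq_square)
  then have pos: "0 < p1 / p3 - (p2 / p3)\<^sup>2"
    by (simp add: field_simps power2_eq_square)
  define z where "z = Complex (p2 / p3) (sqrt (p1 / p3 - (p2 / p3)\<^sup>2))"
  have "0 < Im z" "hvec z = (1 / p3) *\<^sub>R P"
    using pos p3 by (simp_all add: z_def hvec_def P)
  with p3 show ?thesis
    by (intro that[of z "1 / p3"]) simp_all
qed

text \<open>The coefficient of \<open>bvec u\<close> in the basis \<open>bvec u, bvec v, bvec w\<close> by Cramer's rule
  (see \<open>bvec_coord_expansion\<close>); it is \<open>0\<close> when \<open>u, v, w\<close> are not distinct.\<close>

definition coord :: "real option \<Rightarrow> real option \<Rightarrow> real option \<Rightarrow> vec3 \<Rightarrow> real" where
  "coord u v w X = det3 X (bvec v) (bvec w) / det3 (bvec u) (bvec v) (bvec w)"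

lemma coord_swap: "coord u v w X = coord u w v X"
  unfolding coord_def by (metis det3_swap minus_divide_divide)

lemma coord_add [simp]: "coord u v w (X + Y) = coord u v w X + coord u v w Y"
  by (simp add: coord_def add_divide_distrib)

lemma coord_scaleR [simp]: "coord u v w (r *\<^sub>R X) = r * coord u v w X"
  by (simp add: coord_def)

lemma coord_pos_iff:
  "0 < coord u v w X \<longleftrightarrow> 0 < det3 X (bvec v) (bvec w) * det3 (bvec u) (bvec v) (bvec w)"
  by (simp add: coord_def zero_less_divide_iff zero_less_mult_iff)

lemma bvec_coord_expansion:
  assumes "u \<noteq> v" "v \<noteq> w" "w \<noteq> u"
  shows "X = coord u v w X *\<^sub>R bvec u + coord v w u X *\<^sub>R bvec v + coord w u v X *\<^sub>R bvec w"
proof -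
  have "det3 (bvec v) (bvec w) (bvec u) = det3 (bvec u) (bvec v) (bvec w)"
    "det3 (bvec w) (bvec u) (bvec v) = det3 (bvec u) (bvec v) (bvec w)"
    "det3 (bvec u) X (bvec w) = det3 X (bvec w) (bvec u)"
    "det3 (bvec u) (bvec v) X = det3 X (bvec u) (bvec v)"
    by (metis det3_rotate)+
  then show ?thesis
    using vec3_cramer[OF det3_bvec_nonzero[OF assms], of X] by (simp add: coord_def)
qed

section \<open>Geodesics and ideal triangles\<close>

lemma sd_eq_det:
  assumes "a \<noteq> b"
  obtains k where "k \<noteq> 0" "\<And>\<zeta>. sd a b \<zeta> = k * det3 (cvec \<zeta>) (bvec a) (bvec b)"
proof (cases a; cases b)
  fix s t
  assume st: "a = Some s" "b = Some t"
  with assms have "s - t \<noteq> 0"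
    by simp
  show ?thesis
  proof (rule that[of "1 / (s - t)"])
    show "sd a b \<zeta> = 1 / (s - t) * det3 (cvec \<zeta>) (bvec a) (bvec b)" for \<zeta>
      using \<open>s - t \<noteq> 0\<close>
      by (cases \<zeta>; simp add: st hvec_def cmod_power2; simp add: power2_eq_square field_simps)
  qed (use \<open>s - t \<noteq> 0\<close> in simp)
next
  fix t
  assume ab: "a = None" "b = Some t"
  show ?thesis
  proof (rule that[of "-1"])
    show "sd a b \<zeta> = -1 * det3 (cvec \<zeta>) (bvec a) (bvec b)" for \<zeta>
      by (cases \<zeta>) (simp_all add: ab hvec_def)
  qed simp
next
  fix t
  assume ab: "a = Some t" "b = None"
  show ?thesis
  proof (rule that[of 1])
    show "sd a b \<zeta> = 1 * det3 (cvec \<zeta>) (bvec a) (bvec b)" for \<zeta>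
      by (cases \<zeta>) (simp_all add: ab hvec_def)
  qed simp
qed (use assms in simp)

lemma sd_sign:
  assumes "a \<noteq> b"
  shows "0 < sd a b \<zeta> * sd a b \<omega> \<longleftrightarrow>
    0 < det3 (cvec \<zeta>) (bvec a) (bvec b) * det3 (cvec \<omega>) (bvec a) (bvec b)"
proof -
  obtain k where "k \<noteq> 0" and k: "\<And>\<zeta>. sd a b \<zeta> = k * det3 (cvec \<zeta>) (bvec a) (bvec b)"
    using sd_eq_det[OF assms] by blast
  then have "sd a b \<zeta> * sd a b \<omega> =
      k\<^sup>2 * (det3 (cvec \<zeta>) (bvec a) (bvec b) * det3 (cvec \<omega>) (bvec a) (bvec b))"
    by (simp add: power2_eq_square algebra_simps)
  with \<open>k \<noteq> 0\<close> show ?thesis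
    by (simp add: zero_less_mult_iff)
qed

lemma tri_int_coord:
  assumes "u \<noteq> v" "v \<noteq> w" "w \<noteq> u"
  shows "tri_int u v w = {z. 0 < Im z \<and>
    0 < coord u v w (hvec z) \<and> 0 < coord v w u (hvec z) \<and> 0 < coord w u v (hvec z)}"
  using assms by (auto simp: tri_int_def coord_pos_iff sd_sign)

lemma tri_int_rotate: "tri_int u v w = tri_int v w u"
  unfolding tri_int_def by auto

lemma geod_sd:
  assumes "a \<noteq> b"
  shows "geod a b = {z. 0 < Im z \<and> sd a b (Some z) = 0}"
proof (cases a; cases b)
  fix s t
  assume st: "a = Some s" "b = Some t"
  have "cmod w = \<bar>s - t\<bar> / 2 \<longleftrightarrow> (cmod w)\<^sup>2 = (\<bar>s - t\<bar> / 2)\<^sup>2" for w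
    by (rule power2_eq_iff_nonneg[symmetric]) simp_all
  then have "cmod w = \<bar>s - t\<bar> / 2 \<longleftrightarrow> (cmod w)\<^sup>2 - ((s - t) / 2)\<^sup>2 = 0" for w
    by (simp add: power_divide)
  then show ?thesis
    by (simp add: st)
qed (use assms in auto)

lemma geod_det:
  assumes "a \<noteq> b"
  shows "geod a b = {z. 0 < Im z \<and> det3 (hvec z) (bvec a) (bvec b) = 0}"
proof -
  obtain k where "k \<noteq> 0" "\<And>\<zeta>. sd a b \<zeta> = k * det3 (cvec \<zeta>) (bvec a) (bvec b)"
    using sd_eq_det[OF assms] by blast
  then show ?thesis
    by (simp add: geod_sd[OF assms])
qed

lemma geod_iff_pos_comb:
  assumes "a \<noteq> b"
  shows "z \<in> geod a b \<longleftrightarrow>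
    0 < Im z \<and> (\<exists>l>0. \<exists>m>0. hvec z = l *\<^sub>R bvec a + m *\<^sub>R bvec b)"
proof
  assume "z \<in> geod a b"
  then have "0 < Im z" and on_plane: "det3 (hvec z) (bvec a) (bvec b) = 0"
    by (simp_all add: geod_det[OF assms])
  obtain c :: "real option" where "c \<noteq> a" "c \<noteq> b"
    using ex_new_if_finite[of "{a, b}"] infinite_UNIV_char_0 by auto
  define l m where "l = coord a b c (hvec z)" and "m = coord b c a (hvec z)"
  have "coord c a b (hvec z) = 0"
    by (simp add: coord_def on_plane)
  then have comb: "hvec z = l *\<^sub>R bvec a + m *\<^sub>R bvec b"
    using bvec_coord_expansion[of c a b "hvec z"] \<open>c \<noteq> a\<close> \<open>c \<noteq> b\<close> assms
    by (simp add: l_def m_def)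
  have "(Im z)\<^sup>2 = bform (hvec z) (hvec z)"
    by (rule bform_hvec_self[symmetric])
  also have "\<dots> = 2 * l * m * bform (bvec a) (bvec b)"
    unfolding comb by (rule bform_isotropic_comb) simp_all
  finally have "0 < (l * m) * (2 * bform (bvec a) (bvec b))"
    using zero_less_power[OF \<open>0 < Im z\<close>, of 2] by (simp add: ac_simps)
  then have "0 < l * m"
    using bform_bvec_pos[OF assms] by (simp add: zero_less_mult_iff)
  have "1 / 2 = l * bform (bvec a) (bvec None) + m * bform (bvec b) (bvec None)"
    using bform_hvec_infinity[of z] by (simp add: comb)
  then have "0 < l \<or> 0 < m"
    using bform_bvec_nonneg[of a None] bform_bvec_nonneg[of b None] mult_nonpos_nonneg
    by (metis add_nonpos_nonpos not_le zero_less_divide_1_iff zero_less_numeral)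
  with \<open>0 < l * m\<close> have "0 < l" "0 < m"
    by (auto simp: zero_less_mult_iff)
  with \<open>0 < Im z\<close> comb show "0 < Im z \<and> (\<exists>l>0. \<exists>m>0. hvec z = l *\<^sub>R bvec a + m *\<^sub>R bvec b)"
    by blast
next
  assume "0 < Im z \<and> (\<exists>l>0. \<exists>m>0. hvec z = l *\<^sub>R bvec a + m *\<^sub>R bvec b)"
  then show "z \<in> geod a b"
    by (auto simp: geod_det[OF assms])
qed

lemma geod_point_exists:
  assumes "a \<noteq> b" "0 < l" "0 < m"
  obtains z c where "z \<in> geod a b" "0 < c" "hvec z = c *\<^sub>R (l *\<^sub>R bvec a + m *\<^sub>R bvec b)"
proof -
  let ?P = "l *\<^sub>R bvec a + m *\<^sub>R bvec b"
  have "0 < bform (bvec a) (bvec None) \<or> 0 < bform (bvec b) (bvec None)"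
    using assms(1) by (metis bform_bvec_pos)
  then have "0 < bform ?P (bvec None)"
    using assms(2,3) bform_bvec_nonneg[of a None] bform_bvec_nonneg[of b None]
    by (simp del: bvec.simps) (smt (verit) mult_nonneg_nonneg mult_pos_pos)
  moreover have "0 < bform ?P ?P"
    using assms bform_bvec_pos[OF assms(1)] by (simp only: bform_isotropic_comb bform_bvec_self) simp
  ultimately obtain z c where z: "0 < Im z" "0 < c" "hvec z = c *\<^sub>R ?P"
    by (rule timelike_hvec)
  have "hvec z = (c * l) *\<^sub>R bvec a + (c * m) *\<^sub>R bvec b" "0 < c * l" "0 < c * m"
    using z assms by (simp_all add: scaleR_add_right)
  then have "z \<in> geod a b"
    using z(1) geod_iff_pos_comb[OF assms(1)] by blast
  with z show ?thesis
    using that by blast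
qed

text \<open>\<open>a\<close> lies in the closed half-plane bounded by the geodesic \<open>vw\<close> not containing \<open>u\<close>.\<close>

definition beyond :: "real option \<Rightarrow> real option \<Rightarrow> real option \<Rightarrow> real option \<Rightarrow> bool" where
  "beyond u v w a \<longleftrightarrow> coord u v w (bvec a) \<le> 0"

lemma coord_geod_nonpos:
  assumes "a \<noteq> b" "beyond u v w a" "beyond u v w b" "z \<in> geod a b"
  shows "coord u v w (hvec z) \<le> 0"
proof -
  obtain l m where "0 < l" "0 < m" "hvec z = l *\<^sub>R bvec a + m *\<^sub>R bvec b"
    using assms(4) geod_iff_pos_comb[OF assms(1)] by blast
  with assms(2,3) show ?thesis
    by (simp add: beyond_def add_nonpos_nonpos mult_nonneg_nonpos)
qed

lemma tri_int_geod_disjoint: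
  assumes "u \<noteq> v" "v \<noteq> w" "w \<noteq> u" "a \<noteq> b" "beyond u v w a" "beyond u v w b"
  shows "tri_int u v w \<inter> geod a b = {}"
  using coord_geod_nonpos[OF assms(4-6)] by (force simp: tri_int_coord[OF assms(1-3)])

text \<open>The \<open>a\<^sub>i\<close>, \<open>b\<^sub>i\<close> are the coordinates of two boundary points with respect to an ideal
  triangle and \<open>c\<^sub>i\<close> is the value of \<open>bform\<close> on the two vertices other than the \<open>i\<close>-th.
  The conclusion makes the constraints \<open>t a\<^sub>1 + b\<^sub>1 > 0\<close> and \<open>t a\<^sub>2 + b\<^sub>2 > 0\<close> on a point
  \<open>t A + B\<close> of the geodesic compatible.\<close>

lemma isotropic_coords_cross_pos:
  fixes a1 a2 a3 b1 b2 b3 c1 c2 c3 :: real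
  assumes c: "0 < c1" "0 < c2" "0 < c3"
    and iso_a: "a1 * a2 * c3 + a2 * a3 * c1 + a3 * a1 * c2 = 0"
    and iso_b: "b1 * b2 * c3 + b2 * b3 * c1 + b3 * b1 * c2 = 0"
    and "0 \<le> a2 * c3 + a3 * c2" "0 \<le> b1 * c3 + b3 * c1"
    and "0 < a1" "b1 \<le> 0" "a2 < 0" "0 < b2"
  shows "0 < a1 * b2 - a2 * b1"
proof (cases "b1 = 0")
  case True
  with assms show ?thesis
    by simp
next
  case False
  with assms have "b1 < 0"
    by simp
  have "a2 * c3 < 0" "b1 * c3 < 0"
    using assms \<open>b1 < 0\<close> by (simp_all add: mult_neg_pos)
  with assms have "0 < a3 * c2" "0 < b3 * c1"
    by linarith+
  with c have "0 < a3" "0 < b3"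
    by (simp_all add: zero_less_mult_iff)
  define p q where "p = a1 * c3 + a3 * c1" and "q = b2 * c3 + b3 * c2"
  have "0 < p" "0 < q"
    using assms \<open>0 < a3\<close> \<open>0 < b3\<close> by (simp_all add: p_def q_def add_pos_pos)
  have eq_a: "a2 * p = - (a3 * a1 * c2)" and eq_b: "b1 * q = - (b2 * b3 * c1)"
    using iso_a iso_b by (simp_all add: p_def q_def algebra_simps)
  have "(a2 * b1) * (p * q) = (a2 * p) * (b1 * q)"
    by (simp only: ac_simps)
  also have "\<dots> = (a1 * b2) * (a3 * b3 * c1 * c2)"
    unfolding eq_a eq_b by (simp add: ac_simps)
  finally have "(a1 * b2 - a2 * b1) * (p * q) = (a1 * b2) * (p * q - a3 * b3 * c1 * c2)"
    by (simp only: left_diff_distrib right_diff_distrib)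
  also have "p * q - a3 * b3 * c1 * c2 = a1 * b2 * c3 * c3 + a1 * b3 * c3 * c2 + a3 * b2 * c1 * c3"
    by (simp add: p_def q_def algebra_simps)
  also have "0 < (a1 * b2) * \<dots>"
    using assms \<open>0 < a3\<close> \<open>0 < b3\<close> by (simp add: add_pos_pos)
  finally have "0 < (a1 * b2 - a2 * b1) * (p * q)" .
  moreover have "0 < p * q"
    using \<open>0 < p\<close> \<open>0 < q\<close> by simp
  ultimately show ?thesis
    by (rule zero_less_mult_pos2)
qed

lemma coord_cross_pos:
  assumes "u \<noteq> v" "v \<noteq> w" "w \<noteq> u"
    and "0 < coord u v w (bvec a)" "coord u v w (bvec b) \<le> 0"
    and "coord v w u (bvec a) < 0" "0 < coord v w u (bvec b)"
  shows "0 < coord u v w (bvec a) * coord v w u (bvec b) - coord v w u (bvec a) * coord u v w (bvec b)"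
proof -
  define a1 a2 a3 where "a1 = coord u v w (bvec a)" and "a2 = coord v w u (bvec a)"
    and "a3 = coord w u v (bvec a)"
  define b1 b2 b3 where "b1 = coord u v w (bvec b)" and "b2 = coord v w u (bvec b)"
    and "b3 = coord w u v (bvec b)"
  define c1 c2 c3 where "c1 = bform (bvec v) (bvec w)" and "c2 = bform (bvec w) (bvec u)"
    and "c3 = bform (bvec u) (bvec v)"
  have iso: "bform (bvec u) (bvec u) = 0" "bform (bvec v) (bvec v) = 0" "bform (bvec w) (bvec w) = 0"
    by simp_all
  have "bvec a = a1 *\<^sub>R bvec u + a2 *\<^sub>R bvec v + a3 *\<^sub>R bvec w"
    unfolding a1_def a2_def a3_def by (rule bvec_coord_expansion[OF assms(1-3)])
  note A = bform_isotropic_comb3[OF iso this, folded c1_def c2_def c3_def]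
  have "bvec b = b1 *\<^sub>R bvec u + b2 *\<^sub>R bvec v + b3 *\<^sub>R bvec w"
    unfolding b1_def b2_def b3_def by (rule bvec_coord_expansion[OF assms(1-3)])
  note B = bform_isotropic_comb3[OF iso this, folded c1_def c2_def c3_def]
  have "0 < a1 * b2 - a2 * b1"
  proof (rule isotropic_coords_cross_pos)
    show "0 < c1" "0 < c2" "0 < c3"
      using assms(1-3) by (simp_all add: c1_def c2_def c3_def bform_bvec_pos)
    show "a1 * a2 * c3 + a2 * a3 * c1 + a3 * a1 * c2 = 0"
      "b1 * b2 * c3 + b2 * b3 * c1 + b3 * b1 * c2 = 0"
      using A(1) B(1) by (simp_all only: bform_bvec_self) simp_all
    show "0 \<le> a2 * c3 + a3 * c2" "0 \<le> b1 * c3 + b3 * c1"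
      using A(2) B(3) bform_bvec_nonneg by metis+
  qed (use assms(4-7) in \<open>simp_all add: a1_def a2_def b1_def b2_def\<close>)
  then show ?thesis
    by (simp add: a1_def a2_def b1_def b2_def)
qed

lemma tri_int_geod_meet:
  assumes "u \<noteq> v" "v \<noteq> w" "w \<noteq> u" "a \<noteq> b"
    and "\<not> beyond u v w a \<or> \<not> beyond u v w b" "\<not> beyond v w u a \<or> \<not> beyond v w u b"
    "\<not> beyond w u v a \<or> \<not> beyond w u v b"
  shows "tri_int u v w \<inter> geod a b \<noteq> {}"
proof -
  define \<alpha> \<beta> :: "nat \<Rightarrow> real"
    where "\<alpha> i = [coord u v w (bvec a), coord v w u (bvec a), coord w u v (bvec a)] ! i"
      and "\<beta> i = [coord u v w (bvec b), coord v w u (bvec b), coord w u v (bvec b)] ! i" for i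
  have "\<exists>t>0. \<forall>i\<in>{0, 1, 2}. 0 < t * \<alpha> i + \<beta> i"
  proof (rule exists_pos_affine_all_pos)
    show "0 < \<alpha> i \<or> 0 < \<beta> i" if "i \<in> {0, 1, 2}" for i
      using that assms(5-7) by (auto simp: \<alpha>_def \<beta>_def beyond_def)
    show "0 < \<alpha> i * \<beta> j - \<alpha> j * \<beta> i"
      if "i \<in> {0, 1, 2}" "j \<in> {0, 1, 2}" "0 < \<alpha> i" "\<beta> i \<le> 0" "\<alpha> j < 0" "0 < \<beta> j" for i j
      using that assms(1-3)
        coord_cross_pos[of u v w a b] coord_cross_pos[of v w u a b] coord_cross_pos[of w u v a b]
        coord_cross_pos[of u w v a b] coord_cross_pos[of v u w a b] coord_cross_pos[of w v u a b]
      by (auto simp: \<alpha>_def \<beta>_def coord_swap[of u w v] coord_swap[of v u w] coord_swap[of w v u])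
  qed (simp, blast)
  then obtain t where "0 < t" and t: "\<forall>i\<in>{0, 1, 2}. 0 < t * \<alpha> i + \<beta> i"
    by blast
  obtain z c where "z \<in> geod a b" "0 < c" and z: "hvec z = c *\<^sub>R (t *\<^sub>R bvec a + 1 *\<^sub>R bvec b)"
    using geod_point_exists[OF assms(4) \<open>0 < t\<close> zero_less_one] by blast
  have "0 < coord u v w (hvec z)" "0 < coord v w u (hvec z)" "0 < coord w u v (hvec z)"
    using t \<open>0 < c\<close> by (auto simp: z \<alpha>_def \<beta>_def)
  with \<open>z \<in> geod a b\<close> have "z \<in> tri_int u v w \<inter> geod a b"
    by (simp add: tri_int_coord[OF assms(1-3)] geod_iff_pos_comb[OF assms(4)])
  then show ?thesis
    by blast
qed

lemma tri_int_geod_disjoint_iff: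
  assumes "u \<noteq> v" "v \<noteq> w" "w \<noteq> u" "a \<noteq> b"
  shows "tri_int u v w \<inter> geod a b = {} \<longleftrightarrow>
    beyond u v w a \<and> beyond u v w b \<or> beyond v w u a \<and> beyond v w u b \<or>
    beyond w u v a \<and> beyond w u v b"
  using tri_int_geod_meet[OF assms] tri_int_geod_disjoint[OF assms(1-4)]
    tri_int_geod_disjoint[OF assms(2,3,1,4)] tri_int_geod_disjoint[OF assms(3,1,2,4)]
  by (metis tri_int_rotate)

section \<open>Farey edges do not cross\<close>

fun veronese :: "int \<times> int \<Rightarrow> vec3" where
  "veronese (p, q) = ((of_int p)\<^sup>2, of_int p * of_int q, (of_int q)\<^sup>2)"

fun det2 :: "int \<times> int \<Rightarrow> int \<times> int \<Rightarrow> int" where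
  "det2 (p, q) (r, s) = p * s - q * r"

lemma bvec_emb_veronese:
  obtains c where "0 < c" "bvec (emb u) = c *\<^sub>R veronese (frac u)"
proof (cases u)
  case None
  then show ?thesis
    using that[of 1] by (simp add: emb_def)
next
  case (Some r)
  obtain p q where pq: "quotient_of r = (p, q)"
    by fastforce
  then have "0 < q" "of_rat r = (of_int p / of_int q :: real)"
    using quotient_of_denom_pos[OF pq] quotient_of_div[OF pq] by (simp_all add: of_rat_divide)
  then show ?thesis
    using that[of "1 / (of_int q)\<^sup>2"] by (simp add: Some emb_def pq power2_eq_square field_simps)
qed

lemma det3_veronese:
  "det3 (veronese P) (veronese Q) (veronese R) = of_int (det2 P Q * det2 P R * det2 Q R)"
  by (cases P; cases Q; cases R) (simp add: power2_eq_square algebra_simps)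

lemma det2_plucker: "det2 P Q * det2 U V = det2 P U * det2 Q V - det2 P V * det2 Q U"
  by (cases P; cases Q; cases U; cases V) (simp add: algebra_simps)

lemma mult_nonneg_if_abs_diff_eq_1:
  fixes x y :: int
  assumes "\<bar>x - y\<bar> = 1"
  shows "0 \<le> x * y"
  unfolding zero_le_mult_iff using assms by arith

lemma farey_adj_iff_det2: "farey_adj u v \<longleftrightarrow> \<bar>det2 (frac u) (frac v)\<bar> = 1"
  by (cases "frac u"; cases "frac v") (simp add: farey_adj_def)

lemma farey_adj_sym: "farey_adj u v \<Longrightarrow> farey_adj v u"
  unfolding farey_adj_iff_det2 by (cases "frac u"; cases "frac v") (simp add: abs_minus_commute ac_simps)

lemma farey_adj_emb_neq:
  assumes "farey_adj u v"
  shows "emb u \<noteq> emb v"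
proof
  assume "emb u = emb v"
  then have "u = v"
    by (cases u; cases v) (simp_all add: emb_def)
  with assms show False
    by (cases "frac v") (simp add: farey_adj_iff_det2)
qed

lemma farey_edges_noncrossing:
  assumes "farey_adj p q" "farey_adj v w"
  shows "0 \<le> coord u (emb v) (emb w) (bvec (emb p)) * coord u (emb v) (emb w) (bvec (emb q))"
proof -
  define P Q V W where "P = frac p" and "Q = frac q" and "V = frac v" and "W = frac w"
  obtain cp cq cv cw where pos: "0 < cp" "0 < cq" "0 < cv" "0 < cw"
    and eqs: "bvec (emb p) = cp *\<^sub>R veronese P" "bvec (emb q) = cq *\<^sub>R veronese Q"
      "bvec (emb v) = cv *\<^sub>R veronese V" "bvec (emb w) = cw *\<^sub>R veronese W"
    unfolding P_def Q_def V_def W_def by (metis bvec_emb_veronese)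
  define N where "N = (det2 P V * det2 Q W) * (det2 P W * det2 Q V) * (det2 V W)\<^sup>2"
  have "det3 (bvec (emb p)) (bvec (emb v)) (bvec (emb w)) *
      det3 (bvec (emb q)) (bvec (emb v)) (bvec (emb w)) = (cp * cv * cw) * (cq * cv * cw) * of_int N"
    unfolding eqs det3_scaleR_all det3_veronese N_def by (simp add: power2_eq_square ac_simps)
  \<comment> \<open>Pluecker: the two products in \<open>N\<close> differ by \<open>\<plusminus>det2 P Q * det2 V W = \<plusminus>1\<close>.\<close>
  moreover have "\<bar>det2 P V * det2 Q W - det2 P W * det2 Q V\<bar> = 1"
    using assms by (simp add: farey_adj_iff_det2 P_def Q_def V_def W_def abs_mult flip: det2_plucker)
  then have "0 \<le> N"
    unfolding N_def using mult_nonneg_if_abs_diff_eq_1 by simp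
  ultimately have "0 \<le> det3 (bvec (emb p)) (bvec (emb v)) (bvec (emb w)) *
      det3 (bvec (emb q)) (bvec (emb v)) (bvec (emb w))"
    using pos by simp
  then show ?thesis
    by (simp add: coord_def)
qed

lemma farey_triangle_rotate: "farey_triangle u v w \<Longrightarrow> farey_triangle v w u"
  by (auto simp: farey_triangle_def)

lemma ladder_vertex_beyond:
  assumes T: "farey_triangle u v w" and "x \<noteq> y"
    and "beyond (emb u) (emb v) (emb w) x" "beyond (emb u) (emb v) (emb w) y"
    and "r \<in> ladder_vertices x y"
  shows "beyond (emb u) (emb v) (emb w) (emb r)"
proof (rule ccontr)
  let ?c = "coord (emb u) (emb v) (emb w)"
  assume "\<not> ?thesis"
  then have "0 < ?c (bvec (emb r))"
    by (simp add: beyond_def)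
  obtain r1 r2 r3 z where R: "farey_triangle r1 r2 r3" "r \<in> {r1, r2, r3}"
    and z: "z \<in> tri_int (emb r1) (emb r2) (emb r3)" "z \<in> geod x y"
    using assms(5) by (auto simp: ladder_vertices_def ladder_triangles_def)
  have adj: "farey_adj r1 r2" "farey_adj r2 r3" "farey_adj r3 r1"
    using R(1) by (simp_all add: farey_triangle_def)
  \<comment> \<open>The vertices of the ladder triangle lie weakly on one side of the Farey edge \<open>vw\<close>,
    and its interior point \<open>z\<close> on \<open>xy\<close> would then lie strictly on the side of \<open>u\<close>.\<close>
  have "0 \<le> ?c (bvec (emb r)) * ?c (bvec (emb t))" if "t \<in> {r1, r2, r3}" for t
  proof (cases "t = r")
    case False
    with R(2) that adj have "farey_adj r t"
      by (auto intro: farey_adj_sym)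
    with T show ?thesis
      by (simp add: farey_triangle_def farey_edges_noncrossing)
  qed simp
  with \<open>0 < ?c (bvec (emb r))\<close> have nonneg: "0 \<le> ?c (bvec (emb t))" if "t \<in> {r1, r2, r3}" for t
    using that by (simp add: zero_le_mult_iff)
  have dist: "emb r1 \<noteq> emb r2" "emb r2 \<noteq> emb r3" "emb r3 \<noteq> emb r1"
    using adj by (simp_all add: farey_adj_emb_neq)
  define g1 g2 g3 where "g1 = coord (emb r1) (emb r2) (emb r3) (hvec z)"
    and "g2 = coord (emb r2) (emb r3) (emb r1) (hvec z)"
    and "g3 = coord (emb r3) (emb r1) (emb r2) (hvec z)"
  have "0 < g1" "0 < g2" "0 < g3"
    using z(1) by (simp_all add: tri_int_coord[OF dist] g1_def g2_def g3_def)
  have "?c (hvec z) = g1 * ?c (bvec (emb r1)) + g2 * ?c (bvec (emb r2)) + g3 * ?c (bvec (emb r3))"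
    by (subst bvec_coord_expansion[OF dist]) (simp add: g1_def g2_def g3_def)
  also have "\<dots> > 0"
  proof -
    have "0 \<le> g1 * ?c (bvec (emb r1))" "0 \<le> g2 * ?c (bvec (emb r2))" "0 \<le> g3 * ?c (bvec (emb r3))"
      using nonneg \<open>0 < g1\<close> \<open>0 < g2\<close> \<open>0 < g3\<close> by simp_all
    moreover have "0 < g1 * ?c (bvec (emb r1)) \<or> 0 < g2 * ?c (bvec (emb r2)) \<or>
        0 < g3 * ?c (bvec (emb r3))"
      using R(2) \<open>0 < ?c (bvec (emb r))\<close> \<open>0 < g1\<close> \<open>0 < g2\<close> \<open>0 < g3\<close> by auto
    ultimately show ?thesis
      by linarith
  qed
  finally show False
    using coord_geod_nonpos[OF assms(2-4) z(2)] by simp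
qed

lemma ladder_triangles_mono:
  assumes "x \<noteq> y" "r \<in> ladder_vertices x y" "s \<in> ladder_vertices x y" "r \<noteq> s"
  shows "ladder_triangles (emb r) (emb s) \<subseteq> ladder_triangles x y"
proof clarify
  fix u v w
  assume "(u, v, w) \<in> ladder_triangles (emb r) (emb s)"
  then have T: "farey_triangle u v w"
    and meets: "tri_int (emb u) (emb v) (emb w) \<inter> geod (emb r) (emb s) \<noteq> {}"
    by (simp_all add: ladder_triangles_def)
  have "emb r \<noteq> emb s"
    using assms(4) by (cases r; cases s) (simp_all add: emb_def)
  have separated: "tri_int (emb p) (emb q) (emb q') \<inter> geod (emb r) (emb s) = {}"
    if "farey_triangle p q q'" "beyond (emb p) (emb q) (emb q') x" "beyond (emb p) (emb q) (emb q') y"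
    for p q q'
    using that ladder_vertex_beyond[OF that(1) assms(1) that(2,3)] assms(2,3) \<open>emb r \<noteq> emb s\<close>
    by (intro tri_int_geod_disjoint) (auto simp: farey_triangle_def farey_adj_emb_neq)
  have "tri_int (emb u) (emb v) (emb w) \<inter> geod x y \<noteq> {}"
  proof
    assume "tri_int (emb u) (emb v) (emb w) \<inter> geod x y = {}"
    moreover have "emb u \<noteq> emb v" "emb v \<noteq> emb w" "emb w \<noteq> emb u"
      using T by (simp_all add: farey_triangle_def farey_adj_emb_neq)
    ultimately consider
        "beyond (emb u) (emb v) (emb w) x" "beyond (emb u) (emb v) (emb w) y"
      | "beyond (emb v) (emb w) (emb u) x" "beyond (emb v) (emb w) (emb u) y"
      | "beyond (emb w) (emb u) (emb v) x" "beyond (emb w) (emb u) (emb v) y"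
      using tri_int_geod_disjoint_iff assms(1) by blast
    then show False
    proof cases
      case 1
      with separated[OF T] meets show False
        by blast
    next
      case 2
      with separated[OF farey_triangle_rotate[OF T]] meets show False
        by (simp add: tri_int_rotate[of "emb u"])
    next
      case 3
      with separated[OF farey_triangle_rotate[OF farey_triangle_rotate[OF T]]] meets show False
        by (simp add: tri_int_rotate[of "emb w"])
    qed
  qed
  with T show "(u, v, w) \<in> ladder_triangles x y"
    by (simp add: ladder_triangles_def)
qed

theorem mainTheorem4:
  fixes x y :: "real option" and r s :: "rat option"
  assumes "x \<noteq> y"
    and "r \<in> ladder_vertices x y" and "s \<in> ladder_vertices x y" and "r \<noteq> s"
  shows "ladder (emb r) (emb s) \<subseteq> ladder x y"
  using ladder_triangles_mono[OF assms] unfolding ladder_def by blast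

end
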